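(* Let $\mathcal{T}$ be a set of monomials, and let $\mathcal{L}=(n,\mathcal{M},\mathcal{C})$ be a simple linearization with $\mathcal{S}\cup\mathcal{T}\subseteq\mathcal{M}$ such that every node of $D(\mathcal{L})$ with in-degree $0$ belongs to $\mathcal{T}$. Let $m_1,m_2,m_3\in\mathcal{T}$ be pairwise different with $m_1\cap m_2\cap m_3\neq\emptyset$ such that $m_3\cap(m_1\cup m_2)$ is a proper superset of both $m_3\cap m_1$ and $m_3\cap m_2$. Then $G(D(\mathcal{L}))$ contains a cycle.
   Context: $[n]=\{1,\dots,n\}$; a monomial is a nonempty subset of $[n]$; $\mathcal{S}=\{\{i\}:i\in[n]\}$. A linearization is a triple $\mathcal{L}=(n,\mathcal{M},\mathcal{C})$, where $\mathcal{M}$ is a set of monomials with $\mathcal{S}\subseteq\mathcal{M}$ and $\mathcal{C}$ is a set of AND-constraints; each AND-constraint is a set $c\subseteq\mathcal{M}$ whose union $\bigcup c$ (resultant) lies in $\mathcal{M}$. $\mathcal{P}=\mathcal{M}\setminus\mathcal{S}$. Linearizations are consistent: each $m\in\mathcal{P}$ is the resultant of some $c$ with $|m'|<|m|$ for all $m'\in c$. $\mathcal{L}$ is simple if each proper monomial is the resultant of exactly one AND-constraint and $|\mathcal{C}|=|\mathcal{P}|$. $D(\mathcal{L})$ has node set $\mathcal{M}$ and, for each $c\in\mathcal{C}$, arcs from $\bigcup c$ to each $m\in c$; $G(D(\mathcal{L}))$ is its underlying undirected graph. *)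

theory Defs
  imports Main
begin

definition monomials :: "nat \<Rightarrow> nat set set" where
  "monomials n = {m. m \<noteq> {} \<and> m \<subseteq> {1..n}}"

definition singletons :: "nat \<Rightarrow> nat set set" where
  "singletons n = {{i} | i. i \<in> {1..n}}"

definition proper_monomials :: "nat \<Rightarrow> nat set set \<Rightarrow> nat set set" where
  "proper_monomials n M = M - singletons n"

text \<open>Linearization (n, M, C), including the standing consistency assumption.\<close>
definition linearization :: "nat \<Rightarrow> nat set set \<Rightarrow> nat set set set \<Rightarrow> bool" where
  "linearization n M C \<longleftrightarrow>
     M \<subseteq> monomials n \<and> singletons n \<subseteq> M \<and>
     (\<forall>c\<in>C. c \<subseteq> M \<and> \<Union>c \<in> M) \<and>
     (\<forall>m\<in>proper_monomials n M. \<exists>c\<in>C. \<Union>c = m \<and> (\<forall>m'\<in>c. card m' < card m))"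

definition simple_linearization :: "nat \<Rightarrow> nat set set \<Rightarrow> nat set set set \<Rightarrow> bool" where
  "simple_linearization n M C \<longleftrightarrow> linearization n M C \<and>
     (\<forall>m\<in>proper_monomials n M. \<exists>!c. c \<in> C \<and> \<Union>c = m) \<and>
     card C = card (proper_monomials n M)"

definition D_arcs :: "nat set set set \<Rightarrow> (nat set \<times> nat set) set" where
  "D_arcs C = {(\<Union>c, m) | c m. c \<in> C \<and> m \<in> c}"

definition in_degree_zero :: "nat set set set \<Rightarrow> nat set \<Rightarrow> bool" where
  "in_degree_zero C v \<longleftrightarrow> (\<nexists>u. (u, v) \<in> D_arcs C)"

definition G_adj :: "nat set set set \<Rightarrow> nat set \<Rightarrow> nat set \<Rightarrow> bool" where
  "G_adj C u v \<longleftrightarrow> (u, v) \<in> D_arcs C \<or> (v, u) \<in> D_arcs C"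

definition G_has_cycle :: "nat set set \<Rightarrow> nat set set set \<Rightarrow> bool" where
  "G_has_cycle M C \<longleftrightarrow> (\<exists>vs. length vs \<ge> 3 \<and> distinct vs \<and> set vs \<subseteq> M \<and>
     (\<forall>i < length vs. G_adj C (vs ! i) (vs ! ((i + 1) mod length vs))))"

end

theory Submission
  imports Defs
begin

(* Suppose G(D(L)) has no cycle. Pick i in m1, m2 and m3, j in m3 and m2 but not m1, and k in
   m3 and m1 but not m2. By consistency every monomial u containing x is joined to {x} by a
   descending path through monomials containing x, so two monomials sharing x are joined by a
   path all of whose nodes contain x; in a forest this path is unique. If u contains i, j and k,
   the unique path from u to m1 thus runs through nodes containing both i and k, and as u is not
   below m1 its first step is an arc u -> s. Likewise there is an arc u -> t with i, j in t, and
   the descending paths from s and t to {i} would close a cycle through u unless s = t. So s is a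
   strictly smaller monomial containing i, j and k, and by induction on |u| no such u exists,
   whereas m3 is one. *)

definition is_path :: "('a \<Rightarrow> 'a \<Rightarrow> bool) \<Rightarrow> 'a list \<Rightarrow> bool" where
  "is_path E xs \<longleftrightarrow> xs \<noteq> [] \<and> distinct xs \<and> successively E xs"

definition has_cycle :: "('a \<Rightarrow> 'a \<Rightarrow> bool) \<Rightarrow> 'a set \<Rightarrow> bool" where
  "has_cycle E V \<longleftrightarrow> (\<exists>vs. length vs \<ge> 3 \<and> distinct vs \<and> set vs \<subseteq> V \<and>
     (\<forall>i < length vs. E (vs ! i) (vs ! ((i + 1) mod length vs))))"

lemma G_has_cycle_iff: "G_has_cycle M C \<longleftrightarrow> has_cycle (G_adj C) M"
  unfolding G_has_cycle_def has_cycle_def ..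

lemma has_cycleI:
  assumes "length vs \<ge> 3" "distinct vs" "set vs \<subseteq> V" "successively E vs"
    and "E (last vs) (hd vs)"
  shows "has_cycle E V"
  unfolding has_cycle_def
proof (intro exI conjI allI impI)
  fix i assume i: "i < length vs"
  show "E (vs ! i) (vs ! ((i + 1) mod length vs))"
  proof (cases "Suc i < length vs")
    case True
    then show ?thesis using successively_nth[OF assms(4)] by simp
  next
    case False
    then have "i = length vs - 1" "vs \<noteq> []" using i by auto
    then show ?thesis using assms(5) by (simp add: last_conv_nth hd_conv_nth)
  qed
qed (use assms in auto)

lemma successively_rev_symp:
  assumes "symp E"
  shows "successively E (rev xs) \<longleftrightarrow> successively E xs"
proof -
  have "(\<lambda>x y. E y x) = E" using assms by (auto dest: sympD)
  then show ?thesis by (metis successively_rev)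
qed

lemma successively_append_tl:
  assumes "successively E xs" "successively E ys" "last xs = hd ys"
  shows "successively E (xs @ tl ys)"
  using assms by (cases ys; cases "tl ys") (auto simp: successively_append_iff)

lemma walk_contains_path:
  assumes "successively E W" "W \<noteq> []"
  shows "\<exists>P. is_path E P \<and> hd P = hd W \<and> last P = last W \<and> set P \<subseteq> set W"
  using assms
proof (induction "length W" arbitrary: W rule: less_induct)
  case less
  show ?case
  proof (cases "distinct W")
    case True
    then show ?thesis using less.prems unfolding is_path_def by blast
  next
    case False
    then obtain xs ys zs y where W: "W = xs @ [y] @ ys @ [y] @ zs"
      using not_distinct_decomp by blast
    define W' where "W' = xs @ [y] @ zs"
    have "successively E (xs @ [y])" "successively E (y # zs)"
      using less.prems(1) successively_append_iff[of E "xs @ [y]" "ys @ [y] @ zs"]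
        successively_append_iff[of E "xs @ [y] @ ys" "y # zs"]
      unfolding W by auto
    then have "successively E W'"
      unfolding W'_def using successively_append_tl[of E "xs @ [y]" "y # zs"] by simp
    moreover have "length W' < length W" "W' \<noteq> []" unfolding W'_def W by simp_all
    ultimately have "\<exists>P. is_path E P \<and> hd P = hd W' \<and> last P = last W' \<and> set P \<subseteq> set W'"
      using less.hyps by blast
    moreover have "hd W' = hd W" "last W' = last W" "set W' \<subseteq> set W"
      unfolding W'_def W by (cases xs; cases zs; auto)+
    ultimately show ?thesis by (metis subset_trans)
  qed
qed

lemma has_cycle_of_diverging_paths:
  assumes "symp E" "successively E (a # p @ [w])" "successively E (a # r @ [w])"
    and "distinct (a # p @ w # r)" "set p \<inter> set r = {}" "p \<noteq> [] \<or> r \<noteq> []"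
    and "set (a # p @ w # r) \<subseteq> V"
  shows "has_cycle E V"
proof (rule has_cycleI)
  let ?vs = "a # p @ w # rev r"
  show "length ?vs \<ge> 3" using assms(6) by (cases p; cases r) auto
  show "distinct ?vs" "set ?vs \<subseteq> V" using assms(4,5,7) by auto
  have "successively E (r @ [w])" using assms(3) by (simp add: successively_Cons)
  then have "successively E (rev (r @ [w]))" by (simp only: successively_rev_symp[OF assms(1)])
  then show "successively E ?vs"
    using assms(2) successively_append_tl[of E "a # p @ [w]" "w # rev r"] by simp
  have "E a (hd (r @ [w]))" using assms(3) by (cases r) auto
  then show "E (last ?vs) (hd ?vs)" using assms(1) by (cases r) (auto dest: sympD)
qed

lemma path_unique:
  assumes "symp E" "\<not> has_cycle E V"
  shows "is_path E xs \<Longrightarrow> is_path E ys \<Longrightarrow> hd xs = hd ys \<Longrightarrow> last xs = last ys \<Longrightarrow>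
    set xs \<subseteq> V \<Longrightarrow> set ys \<subseteq> V \<Longrightarrow> xs = ys"
proof (induction xs arbitrary: ys)
  case Nil
  then show ?case by (simp add: is_path_def)
next
  case (Cons a xs)
  then obtain ys' where ys: "ys = a # ys'" by (cases ys) (auto simp: is_path_def)
  show ?case
  proof (cases "xs = [] \<or> ys' = []")
    case True
    then show ?thesis
      using Cons.prems ys by (auto simp: is_path_def split: if_splits dest: last_in_set)
  next
    case nonempty: False
    show ?thesis
    proof (cases "hd xs = hd ys'")
      case True
      then have "xs = ys'"
        using Cons.IH[of ys'] Cons.prems nonempty unfolding ys
        by (auto simp: is_path_def successively_Cons)
      then show ?thesis using ys by simp
    next
      case False
      have "last xs \<in> set ys'" using Cons.prems nonempty ys by simp
      then obtain p w q where xs: "xs = p @ w # q" "w \<in> set ys'" "\<forall>x\<in>set p. x \<notin> set ys'"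
        using split_list_first_prop[of xs "\<lambda>x. x \<in> set ys'"] nonempty last_in_set by blast
      obtain r s where ys': "ys' = r @ w # s" using xs(2) split_list by fast
      have "has_cycle E V"
      proof (rule has_cycle_of_diverging_paths[OF assms(1), of a p w r])
        show "successively E (a # p @ [w])"
          using Cons.prems(1) successively_append_iff[of E "a # p @ [w]" q]
          unfolding xs is_path_def by simp
        show "successively E (a # r @ [w])"
          using Cons.prems(2) successively_append_iff[of E "a # r @ [w]" s]
          unfolding ys ys' is_path_def by simp
        show "distinct (a # p @ w # r)" "set p \<inter> set r = {}"
          using Cons.prems(1,2) xs(3) unfolding xs ys ys' is_path_def by auto
        show "p \<noteq> [] \<or> r \<noteq> []" using False unfolding xs ys' by auto
        show "set (a # p @ w # r) \<subseteq> V" using Cons.prems(5,6) unfolding xs ys ys' by auto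
      qed
      with assms(2) show ?thesis by contradiction
    qed
  qed
qed

lemma symp_G_adj: "symp (G_adj C)"
  by (auto simp: symp_def G_adj_def)

lemma D_arcs_subset: "(u, v) \<in> D_arcs C \<Longrightarrow> v \<subseteq> u"
  by (auto simp: D_arcs_def)

lemma linearization_finite:
  assumes "linearization n M C" "u \<in> M"
  shows "finite u"
proof (rule finite_subset)
  have "M \<subseteq> monomials n" using assms(1) by (simp add: linearization_def)
  then show "u \<subseteq> {1..n}" using assms(2) by (auto simp: monomials_def)
qed simp

lemma arc_to_smaller_containing:
  assumes lin: "linearization n M C" and "u \<in> M" "x \<in> u" "u \<noteq> {x}"
  obtains m where "(u, m) \<in> D_arcs C" "m \<in> M" "x \<in> m" "card m < card u"
proof -
  have "u \<notin> singletons n"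
  proof
    assume "u \<in> singletons n"
    then obtain i where "u = {i}" unfolding singletons_def by blast
    then show False using assms(3,4) by simp
  qed
  then have "u \<in> proper_monomials n M" using assms(2) by (simp add: proper_monomials_def)
  with lin have "\<exists>c\<in>C. \<Union>c = u \<and> (\<forall>m\<in>c. card m < card u)"
    unfolding linearization_def by (elim conjE bspec)
  then obtain c where c: "c \<in> C" "\<Union>c = u" "\<forall>m\<in>c. card m < card u"
    by (elim bexE conjE)
  then obtain m where "m \<in> c" "x \<in> m" using assms(3) by blast
  have "(\<Union>c, m) \<in> D_arcs C" using c(1) \<open>m \<in> c\<close> unfolding D_arcs_def by blast
  moreover have "m \<in> M" using lin c(1) \<open>m \<in> c\<close> unfolding linearization_def by blast
  ultimately show ?thesis using that \<open>x \<in> m\<close> \<open>m \<in> c\<close> c(2,3) by simp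
qed

lemma descending_path:
  assumes lin: "linearization n M C" and "u \<in> M" "x \<in> u"
  shows "\<exists>ps. is_path (G_adj C) ps \<and> hd ps = u \<and> last ps = {x} \<and> set ps \<subseteq> M \<and>
    (\<forall>v\<in>set ps. x \<in> v \<and> v \<subseteq> u)"
  using assms(2,3)
proof (induction "card u" arbitrary: u rule: less_induct)
  case less
  show ?case
  proof (cases "u = {x}")
    case True
    then show ?thesis using less.prems by (intro exI[of _ "[u]"]) (simp add: is_path_def)
  next
    case False
    then obtain m where m: "(u, m) \<in> D_arcs C" "m \<in> M" "x \<in> m" "card m < card u"
      using arc_to_smaller_containing[OF lin less.prems] by blast
    then obtain ps where ps: "is_path (G_adj C) ps" "hd ps = m" "last ps = {x}" "set ps \<subseteq> M"
      "\<forall>v\<in>set ps. x \<in> v \<and> v \<subseteq> m"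
      using less.hyps by blast
    have "m \<subseteq> u" using m(1) by (rule D_arcs_subset)
    moreover have "u \<notin> set ps"
    proof
      assume "u \<in> set ps"
      then have "u = m" using ps(5) \<open>m \<subseteq> u\<close> by blast
      then show False using m(4) by simp
    qed
    moreover have "G_adj C u m" using m(1) by (simp add: G_adj_def)
    moreover have "\<forall>v\<in>set (u # ps). x \<in> v \<and> v \<subseteq> u"
      using ps(5) less.prems(2) \<open>m \<subseteq> u\<close> by auto
    ultimately show ?thesis using ps less.prems(1)
      by (intro exI[of _ "u # ps"]) (auto simp: is_path_def successively_Cons)
  qed
qed

lemma path_within_pair:
  assumes lin: "linearization n M C" and "u \<in> M" "a \<in> M" "x \<in> u" "x \<in> a"
  obtains P where "is_path (G_adj C) P" "hd P = u" "last P = a" "set P \<subseteq> M"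
    "\<forall>v\<in>set P. x \<in> v \<and> (v \<subseteq> u \<or> v \<subseteq> a)"
proof -
  obtain pu where pu: "is_path (G_adj C) pu" "hd pu = u" "last pu = {x}" "set pu \<subseteq> M"
    "\<forall>v\<in>set pu. x \<in> v \<and> v \<subseteq> u"
    using descending_path[OF lin assms(2,4)] by blast
  obtain pa where pa: "is_path (G_adj C) pa" "hd pa = a" "last pa = {x}" "set pa \<subseteq> M"
    "\<forall>v\<in>set pa. x \<in> v \<and> v \<subseteq> a"
    using descending_path[OF lin assms(3,5)] by blast
  define W where "W = pu @ tl (rev pa)"
  have "successively (G_adj C) pu" "successively (G_adj C) pa" "pu \<noteq> []" "pa \<noteq> []"
    using pu(1) pa(1) unfolding is_path_def by simp_all
  have "successively (G_adj C) (rev pa)"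
    using \<open>successively (G_adj C) pa\<close> by (simp only: successively_rev_symp[OF symp_G_adj])
  moreover have "last pu = hd (rev pa)" using pu(3) pa(3) \<open>pa \<noteq> []\<close> by (simp add: hd_rev)
  ultimately have walk: "successively (G_adj C) W"
    unfolding W_def by (rule successively_append_tl[OF \<open>successively (G_adj C) pu\<close>])
  have ne: "W \<noteq> []" and hd: "hd W = u" using \<open>pu \<noteq> []\<close> pu(2) unfolding W_def by simp_all
  have last: "last W = a"
  proof (cases "tl (rev pa) = []")
    case True
    then have "pa = [{x}]"
      using pa(3) \<open>pa \<noteq> []\<close> list.collapse[of "rev pa"] by (simp add: hd_rev)
    then show ?thesis using \<open>pu \<noteq> []\<close> pu(3) pa(2) True unfolding W_def by simp
  next
    case False
    then show ?thesis using \<open>pa \<noteq> []\<close> pa(2) unfolding W_def by (simp add: last_tl last_rev)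
  qed
  obtain P where P: "is_path (G_adj C) P" "hd P = u" "last P = a" "set P \<subseteq> set W"
    using walk_contains_path[OF walk ne] hd last by auto
  have "set W \<subseteq> set pu \<union> set pa"
    unfolding W_def using list.set_sel(2)[of "rev pa"] by (cases "rev pa = []") auto
  then have "set P \<subseteq> M" "\<forall>v\<in>set P. x \<in> v \<and> (v \<subseteq> u \<or> v \<subseteq> a)"
    using P(4) pu(4,5) pa(4,5) by blast+
  with P(1-3) show ?thesis by (rule that)
qed

lemma out_arc_containing_pair:
  assumes lin: "linearization n M C" and forest: "\<not> has_cycle (G_adj C) M"
    and "a \<in> M" "u \<in> M" "i \<in> a" "i \<in> u" "y \<in> a" "y \<in> u" "\<not> u \<subseteq> a"
  obtains s where "(u, s) \<in> D_arcs C" "s \<noteq> u" "s \<in> M" "i \<in> s" "y \<in> s"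
proof -
  obtain P where P: "is_path (G_adj C) P" "hd P = u" "last P = a" "set P \<subseteq> M"
    "\<forall>v\<in>set P. i \<in> v \<and> (v \<subseteq> u \<or> v \<subseteq> a)"
    using path_within_pair[OF lin assms(4,3,6,5)] .
  obtain Q where Q: "is_path (G_adj C) Q" "hd Q = u" "last Q = a" "set Q \<subseteq> M"
    "\<forall>v\<in>set Q. y \<in> v \<and> (v \<subseteq> u \<or> v \<subseteq> a)"
    using path_within_pair[OF lin assms(4,3,8,7)] .
  have "P = Q" using path_unique[OF symp_G_adj forest P(1) Q(1)] P(2-4) Q(2-4) by simp
  have "P \<noteq> [u]" using P(3) assms(9) by auto
  then obtain s R where P_eq: "P = u # s # R"
    using P(1,2) unfolding is_path_def by (metis list.collapse)
  have "s \<noteq> u" "G_adj C u s" using P(1) unfolding P_eq is_path_def by auto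
  have "s \<in> M" "i \<in> s" "y \<in> s" "s \<subseteq> u \<or> s \<subseteq> a"
    using P(4,5) Q(5) unfolding \<open>P = Q\<close>[symmetric] P_eq by auto
  have "(s, u) \<notin> D_arcs C"
  proof
    assume "(s, u) \<in> D_arcs C"
    then have "u \<subseteq> s" by (rule D_arcs_subset)
    then show False using \<open>s \<noteq> u\<close> \<open>s \<subseteq> u \<or> s \<subseteq> a\<close> assms(9) by blast
  qed
  then have "(u, s) \<in> D_arcs C" using \<open>G_adj C u s\<close> by (simp add: G_adj_def)
  then show ?thesis using \<open>s \<noteq> u\<close> \<open>s \<in> M\<close> \<open>i \<in> s\<close> \<open>y \<in> s\<close> by (rule that)
qed

lemma out_arcs_sharing_element_eq:
  assumes lin: "linearization n M C" and forest: "\<not> has_cycle (G_adj C) M"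
    and "u \<in> M" "(u, s) \<in> D_arcs C" "(u, t) \<in> D_arcs C" "s \<in> M" "t \<in> M"
    and "s \<noteq> u" "t \<noteq> u" "i \<in> s" "i \<in> t"
  shows "s = t"
proof -
  have step: "\<exists>ps. is_path (G_adj C) (u # ps) \<and> ps \<noteq> [] \<and> hd ps = v \<and> last ps = {i} \<and>
      set ps \<subseteq> M"
    if v: "(u, v) \<in> D_arcs C" "v \<in> M" "v \<noteq> u" "i \<in> v" for v
  proof -
    obtain ps where ps: "is_path (G_adj C) ps" "hd ps = v" "last ps = {i}" "set ps \<subseteq> M"
      "\<forall>w\<in>set ps. i \<in> w \<and> w \<subseteq> v"
      using descending_path[OF lin v(2,4)] by blast
    have "v \<subseteq> u" using v(1) by (rule D_arcs_subset)
    then have "u \<notin> set ps" using ps(5) v(3) by blast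
    moreover have "G_adj C u v" using v(1) by (simp add: G_adj_def)
    ultimately show ?thesis using ps(1-4) by (auto simp: is_path_def successively_Cons)
  qed
  obtain ps pt where ps: "is_path (G_adj C) (u # ps)" "ps \<noteq> []" "hd ps = s" "last ps = {i}"
      "set ps \<subseteq> M"
    and pt: "is_path (G_adj C) (u # pt)" "pt \<noteq> []" "hd pt = t" "last pt = {i}"
      "set pt \<subseteq> M"
    using step[OF assms(4,6,8,10)] step[OF assms(5,7,9,11)] by blast
  have "u # ps = u # pt"
  proof (rule path_unique[OF symp_G_adj forest ps(1) pt(1)])
    show "last (u # ps) = last (u # pt)" using ps(2,4) pt(2,4) by simp
    show "set (u # ps) \<subseteq> M" "set (u # pt) \<subseteq> M" using ps(5) pt(5) assms(3) by auto
  qed simp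
  then show ?thesis using \<open>hd ps = s\<close> \<open>hd pt = t\<close> by simp
qed

lemma no_monomial_contains_separating_triple:
  assumes lin: "linearization n M C" and forest: "\<not> has_cycle (G_adj C) M"
    and "m1 \<in> M" "m2 \<in> M" "i \<in> m1" "i \<in> m2" "k \<in> m1" "k \<notin> m2" "j \<in> m2" "j \<notin> m1"
  shows "u \<in> M \<Longrightarrow> \<not> {i, j, k} \<subseteq> u"
proof (induction "card u" arbitrary: u rule: less_induct)
  case less
  show ?case
  proof
    assume "{i, j, k} \<subseteq> u"
    then have "i \<in> u" "j \<in> u" "k \<in> u" by simp_all
    obtain s where s: "(u, s) \<in> D_arcs C" "s \<noteq> u" "s \<in> M" "i \<in> s" "k \<in> s"
      using out_arc_containing_pair[OF lin forest assms(3) less.prems assms(5) \<open>i \<in> u\<close>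
          assms(7) \<open>k \<in> u\<close>] \<open>j \<in> u\<close> assms(10) by blast
    obtain t where t: "(u, t) \<in> D_arcs C" "t \<noteq> u" "t \<in> M" "i \<in> t" "j \<in> t"
      using out_arc_containing_pair[OF lin forest assms(4) less.prems assms(6) \<open>i \<in> u\<close>
          assms(9) \<open>j \<in> u\<close>] \<open>k \<in> u\<close> assms(8) by blast
    have "s = t"
      using out_arcs_sharing_element_eq[OF lin forest less.prems s(1) t(1) s(3) t(3) s(2) t(2)
          s(4) t(4)] .
    have "s \<subset> u" using D_arcs_subset[OF s(1)] s(2) by blast
    then have "card s < card u"
      using psubset_card_mono linearization_finite[OF lin less.prems] by blast
    then show False using less.hyps[OF _ s(3)] s(4,5) t(5) \<open>s = t\<close> by simp
  qed
qed

theorem lemma4p4: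
  fixes n :: nat and M T :: "nat set set" and C :: "nat set set set"
    and m1 m2 m3 :: "nat set"
  assumes "T \<subseteq> monomials n"
    and "simple_linearization n M C"
    and "singletons n \<union> T \<subseteq> M"
    and "\<forall>v\<in>M. in_degree_zero C v \<longrightarrow> v \<in> T"
    and "m1 \<in> T" and "m2 \<in> T" and "m3 \<in> T"
    and "m1 \<noteq> m2" and "m1 \<noteq> m3" and "m2 \<noteq> m3"
    and "m1 \<inter> m2 \<inter> m3 \<noteq> {}"
    and "m3 \<inter> m1 \<subset> m3 \<inter> (m1 \<union> m2)"
    and "m3 \<inter> m2 \<subset> m3 \<inter> (m1 \<union> m2)"
  shows "G_has_cycle M C"
proof (rule ccontr)
  assume "\<not> G_has_cycle M C"
  then have forest: "\<not> has_cycle (G_adj C) M" by (simp add: G_has_cycle_iff)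
  have lin: "linearization n M C" using assms(2) by (simp add: simple_linearization_def)
  have M: "m1 \<in> M" "m2 \<in> M" "m3 \<in> M" using assms(3,5-7) by auto
  obtain i where i: "i \<in> m1" "i \<in> m2" "i \<in> m3" using assms(11) by blast
  obtain j where j: "j \<in> m3" "j \<in> m2" "j \<notin> m1" using psubset_imp_ex_mem[OF assms(12)] by blast
  obtain k where k: "k \<in> m3" "k \<in> m1" "k \<notin> m2" using psubset_imp_ex_mem[OF assms(13)] by blast
  have "\<not> {i, j, k} \<subseteq> m3"
    using no_monomial_contains_separating_triple[OF lin forest M(1,2) i(1,2) k(2,3) j(2,3) M(3)] .
  then show False using i(3) j(1) k(1) by simp
qed

end
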